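(* Let $(\mathfrak g,[\cdot,\cdot]_{\mathfrak g},E)$ be an ENL algebra and $r\in\mathfrak g\otimes\mathfrak g$ skew-symmetric. Define $r_+:\mathfrak g^*\to\mathfrak g$ by $\langle\eta,r_+(\xi)\rangle=\langle\xi\otimes\eta,r\rangle$. Then $r_+$ is an ENE-relative Rota–Baxter operator on $(\mathfrak g,[\cdot,\cdot]_{\mathfrak g},E)$ with respect to the coadjoint ENE-representation $(\mathfrak g^*;E^*,\mathrm{ad}^* )$ if and only if $r$ is an EN $r$-matrix, i.e. $[\![r,r]\!]=0$ and $(\mathrm{Id}\otimes E-E\otimes\mathrm{Id})(r)=0$.
   Context: Vector spaces are finite-dimensional over an algebraically closed field of characteristic zero. An ENL algebra is a Lie algebra with linear $E$ satisfying $E[x,y]=[x,Ey]$ for all $x,y$. Coadjoint ENE-representation: $\langle\mathrm{ad}^*_x\xi,y\rangle=-\langle\xi,[x,y]_{\mathfrak g}\rangle$ and $E^*$ the dual map of $E$. An ENE-relative Rota–Baxter operator with respect to an ENE-representation $(W;T,\rho)$ is a linear $K:W\to\mathfrak g$ with $[Ku,Kv]_{\mathfrak g}=K(\rho(Ku)v-\rho(Kv)u)$ for all $u,v$ and $E\circ K=K\circ T$. For $r=\sum a_i\otimes b_i$, $[\![r,r]\!]=[r_{12},r_{13}]+[r_{13},r_{23}]+[r_{12},r_{23}]$ in $U(\mathfrak g)^{\otimes3}$ with $r_{12}=\sum a_i\otimes b_i\otimes1$, $r_{13}=\sum a_i\otimes1\otimes b_i$, $r_{23}=\sum1\otimes a_i\otimes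 b_i$. *)

theory Defs
  imports "HOL-Computational_Algebra.Polynomial"
begin

text \<open>Coordinates: the finite-dimensional space g is identified with 'n \<Rightarrow> 'k via a
fixed basis e_1..e_n (index type 'n finite); its dual g* is identified with 'n \<Rightarrow> 'k via
the dual basis. Tensors in g\<otimes>g and g\<otimes>g\<otimes>g are given by their coefficient
arrays in the basis e_i\<otimes>e_j (resp. e_i\<otimes>e_j\<otimes>e_k).\<close>

definition alg_closed :: "'k::field itself \<Rightarrow> bool" where
  "alg_closed _ \<longleftrightarrow> (\<forall>p :: 'k poly. degree p \<noteq> 0 \<longrightarrow> (\<exists>x. poly p x = 0))"

definition vadd :: "('n \<Rightarrow> 'k::field) \<Rightarrow> ('n \<Rightarrow> 'k) \<Rightarrow> ('n \<Rightarrow> 'k)" where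
  "vadd x y = (\<lambda>i. x i + y i)"

definition vsub :: "('n \<Rightarrow> 'k::field) \<Rightarrow> ('n \<Rightarrow> 'k) \<Rightarrow> ('n \<Rightarrow> 'k)" where
  "vsub x y = (\<lambda>i. x i - y i)"

definition smul :: "'k::field \<Rightarrow> ('n \<Rightarrow> 'k) \<Rightarrow> ('n \<Rightarrow> 'k)" where
  "smul c x = (\<lambda>i. c * x i)"

definition lin :: "(('m \<Rightarrow> 'k::field) \<Rightarrow> ('n \<Rightarrow> 'k)) \<Rightarrow> bool" where
  "lin f \<longleftrightarrow> (\<forall>x y. f (vadd x y) = vadd (f x) (f y)) \<and> (\<forall>c x. f (smul c x) = smul c (f x))"

definition basis_vec :: "'n \<Rightarrow> ('n \<Rightarrow> 'k::field)" where
  "basis_vec j = (\<lambda>i. if i = j then 1 else 0)"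

definition pair :: "('n::finite \<Rightarrow> 'k::field) \<Rightarrow> ('n \<Rightarrow> 'k) \<Rightarrow> 'k" where
  "pair \<xi> x = (\<Sum>i\<in>UNIV. \<xi> i * x i)"

definition lie_algebra :: "(('n::finite \<Rightarrow> 'k::field) \<Rightarrow> ('n \<Rightarrow> 'k) \<Rightarrow> ('n \<Rightarrow> 'k)) \<Rightarrow> bool" where
  "lie_algebra br \<longleftrightarrow>
     (\<forall>y. lin (\<lambda>x. br x y)) \<and> (\<forall>x. lin (br x)) \<and>
     (\<forall>x. br x x = (\<lambda>_. 0)) \<and>
     (\<forall>x y z. vadd (vadd (br x (br y z)) (br y (br z x))) (br z (br x y)) = (\<lambda>_. 0))"

definition ENL_algebra :: "(('n::finite \<Rightarrow> 'k::field) \<Rightarrow> ('n \<Rightarrow> 'k) \<Rightarrow> ('n \<Rightarrow> 'k))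
    \<Rightarrow> (('n \<Rightarrow> 'k) \<Rightarrow> ('n \<Rightarrow> 'k)) \<Rightarrow> bool" where
  "ENL_algebra br E \<longleftrightarrow> lie_algebra br \<and> lin E \<and> (\<forall>x y. E (br x y) = br x (E y))"

definition ENE_relative_RB ::
  "(('n::finite \<Rightarrow> 'k::field) \<Rightarrow> ('n \<Rightarrow> 'k) \<Rightarrow> ('n \<Rightarrow> 'k)) \<Rightarrow> (('n \<Rightarrow> 'k) \<Rightarrow> ('n \<Rightarrow> 'k))
   \<Rightarrow> (('m \<Rightarrow> 'k) \<Rightarrow> ('m \<Rightarrow> 'k)) \<Rightarrow> (('n \<Rightarrow> 'k) \<Rightarrow> ('m \<Rightarrow> 'k) \<Rightarrow> ('m \<Rightarrow> 'k))
   \<Rightarrow> (('m \<Rightarrow> 'k) \<Rightarrow> ('n \<Rightarrow> 'k)) \<Rightarrow> bool" where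
  "ENE_relative_RB br E T rho K \<longleftrightarrow>
     lin K \<and>
     (\<forall>u v. br (K u) (K v) = K (vsub (rho (K u) v) (rho (K v) u))) \<and>
     (\<forall>u. E (K u) = K (T u))"

text \<open>Coadjoint representation: <ad*_x xi, y> = - <xi, [x,y]>, i.e. in dual coordinates.\<close>
definition coad :: "(('n::finite \<Rightarrow> 'k::field) \<Rightarrow> ('n \<Rightarrow> 'k) \<Rightarrow> ('n \<Rightarrow> 'k))
   \<Rightarrow> ('n \<Rightarrow> 'k) \<Rightarrow> ('n \<Rightarrow> 'k) \<Rightarrow> ('n \<Rightarrow> 'k)" where
  "coad br x \<xi> = (\<lambda>j. - pair \<xi> (br x (basis_vec j)))"

definition dual_map :: "(('n::finite \<Rightarrow> 'k::field) \<Rightarrow> ('n \<Rightarrow> 'k)) \<Rightarrow> ('n \<Rightarrow> 'k) \<Rightarrow> ('n \<Rightarrow> 'k)" where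
  "dual_map E \<xi> = (\<lambda>j. pair \<xi> (E (basis_vec j)))"

text \<open>r = sum r i j e_i\<otimes>e_j; r_+ with <eta, r_+ xi> = <xi\<otimes>eta, r> = sum xi_i eta_j r_ij.\<close>
definition r_plus :: "('n::finite \<Rightarrow> 'n \<Rightarrow> 'k::field) \<Rightarrow> ('n \<Rightarrow> 'k) \<Rightarrow> ('n \<Rightarrow> 'k)" where
  "r_plus r \<xi> = (\<lambda>j. \<Sum>i\<in>UNIV. \<xi> i * r i j)"

definition skew_tensor :: "('n \<Rightarrow> 'n \<Rightarrow> 'k::field) \<Rightarrow> bool" where
  "skew_tensor r \<longleftrightarrow> (\<forall>i j. r i j = - r j i)"

text \<open>Coefficients of [[r,r]] = [r12,r13] + [r13,r23] + [r12,r23] in g\<otimes>g\<otimes>g.\<close>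
definition CYB :: "(('n::finite \<Rightarrow> 'k::field) \<Rightarrow> ('n \<Rightarrow> 'k) \<Rightarrow> ('n \<Rightarrow> 'k))
   \<Rightarrow> ('n \<Rightarrow> 'n \<Rightarrow> 'k) \<Rightarrow> 'n \<Rightarrow> 'n \<Rightarrow> 'n \<Rightarrow> 'k" where
  "CYB br r a b c =
     (\<Sum>i\<in>UNIV. \<Sum>k\<in>UNIV. r i b * r k c * br (basis_vec i) (basis_vec k) a)
   + (\<Sum>j\<in>UNIV. \<Sum>l\<in>UNIV. r a j * r b l * br (basis_vec j) (basis_vec l) c)
   + (\<Sum>j\<in>UNIV. \<Sum>k\<in>UNIV. r a j * r k c * br (basis_vec j) (basis_vec k) b)"

text \<open>Coefficients of (Id\<otimes>E - E\<otimes>Id)(r).\<close>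
definition IdE_minus_EId :: "(('n::finite \<Rightarrow> 'k::field) \<Rightarrow> ('n \<Rightarrow> 'k))
   \<Rightarrow> ('n \<Rightarrow> 'n \<Rightarrow> 'k) \<Rightarrow> 'n \<Rightarrow> 'n \<Rightarrow> 'k" where
  "IdE_minus_EId E r a b =
     (\<Sum>j\<in>UNIV. r a j * E (basis_vec j) b) - (\<Sum>i\<in>UNIV. r i b * E (basis_vec i) a)"

definition EN_r_matrix :: "(('n::finite \<Rightarrow> 'k::field) \<Rightarrow> ('n \<Rightarrow> 'k) \<Rightarrow> ('n \<Rightarrow> 'k))
   \<Rightarrow> (('n \<Rightarrow> 'k) \<Rightarrow> ('n \<Rightarrow> 'k)) \<Rightarrow> ('n \<Rightarrow> 'n \<Rightarrow> 'k) \<Rightarrow> bool" where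
  "EN_r_matrix br E r \<longleftrightarrow>
     (\<forall>a b c. CYB br r a b c = 0) \<and> (\<forall>a b. IdE_minus_EId E r a b = 0)"

end

theory Submission
  imports Defs
begin

text \<open>Both sides of the Rota--Baxter identity for \<open>r\<^sub>+\<close> are bilinear and both sides of
\<open>E \<circ> r\<^sub>+ = r\<^sub>+ \<circ> E\<^sup>*\<close> are linear, so each identity holds iff it holds on dual basis vectors.
On \<open>e\<^sup>p, e\<^sup>q\<close> the defect of the Rota--Baxter identity, evaluated at the coordinate \<open>c\<close>, is
exactly the coefficient \<open>(p,q,c)\<close> of \<open>[[r,r]]\<close> (skew-symmetry of \<open>r\<close> is needed to match one of
the three terms), and the defect of \<open>E \<circ> r\<^sub>+ = r\<^sub>+ \<circ> E\<^sup>*\<close> on \<open>e\<^sup>p\<close> at \<open>b\<close> is the coefficient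
\<open>(p,b)\<close> of \<open>(Id \<otimes> E - E \<otimes> Id)(r)\<close>.\<close>

lemma sum_basis_vec_mult: "(\<Sum>i\<in>UNIV. basis_vec p i * (f i :: 'k::field)) = f (p :: 'n::finite)"
  unfolding basis_vec_def by (simp add: if_distrib[where f="\<lambda>x. x * _"] cong: if_cong)

lemma basis_vec_expansion: "(\<lambda>j. \<Sum>i\<in>UNIV. (x :: 'n::finite \<Rightarrow> 'k::field) i * basis_vec i j) = x"
  by (rule ext) (simp add: basis_vec_def if_distrib cong: if_cong)

lemma pair_basis_vec: "pair (basis_vec q) y = y q"
  by (simp add: pair_def sum_basis_vec_mult)

lemma r_plus_basis_vec: "r_plus r (basis_vec p) = r p"
  by (rule ext) (simp add: r_plus_def sum_basis_vec_mult)

lemma lin_zero: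
  assumes "lin f"
  shows "f (\<lambda>_. 0) = (\<lambda>_. 0)"
proof -
  have "f (smul 0 (\<lambda>_. 0)) = smul 0 (f (\<lambda>_. 0))"
    using assms by (simp add: lin_def)
  then show ?thesis by (simp add: smul_def)
qed

lemma lin_expand_sum:
  fixes f :: "('n \<Rightarrow> 'k::field) \<Rightarrow> ('m \<Rightarrow> 'k)"
  assumes "lin f" "finite S"
  shows "f (\<lambda>j. \<Sum>i\<in>S. x i * basis_vec i j) = (\<lambda>c. \<Sum>i\<in>S. x i * f (basis_vec i) c)"
  using assms(2)
proof (induction S rule: finite_induct)
  case empty
  then show ?case using lin_zero[OF assms(1)] by simp
next
  case (insert a S)
  have "(\<lambda>j. \<Sum>i\<in>insert a S. x i * basis_vec i j)
      = vadd (smul (x a) (basis_vec a)) (\<lambda>j. \<Sum>i\<in>S. x i * basis_vec i j)"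
    using insert by (simp add: vadd_def smul_def)
  then have "f (\<lambda>j. \<Sum>i\<in>insert a S. x i * basis_vec i j)
      = vadd (smul (x a) (f (basis_vec a))) (f (\<lambda>j. \<Sum>i\<in>S. x i * basis_vec i j))"
    using assms(1) by (simp add: lin_def)
  then show ?case using insert by (simp add: vadd_def smul_def)
qed

lemma lin_expand:
  fixes f :: "('n::finite \<Rightarrow> 'k::field) \<Rightarrow> ('m \<Rightarrow> 'k)"
  assumes "lin f"
  shows "f x c = (\<Sum>i\<in>UNIV. x i * f (basis_vec i) c)"
  using lin_expand_sum[OF assms finite_UNIV, of x] basis_vec_expansion[of x] by simp

lemma lin_eq_on_basis_vec:
  fixes f g :: "('n::finite \<Rightarrow> 'k::field) \<Rightarrow> ('m \<Rightarrow> 'k)"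
  assumes "lin f" "lin g" "\<And>p. f (basis_vec p) = g (basis_vec p)"
  shows "f = g"
proof (intro ext)
  show "f x c = g x c" for x c
    unfolding lin_expand[OF assms(1), where x=x and c=c] lin_expand[OF assms(2), of x c] assms(3) ..
qed

lemma bilin_eq_on_basis_vec:
  fixes F G :: "('n::finite \<Rightarrow> 'k::field) \<Rightarrow> ('m::finite \<Rightarrow> 'k) \<Rightarrow> ('l \<Rightarrow> 'k)"
  assumes "\<And>u. lin (F u)" "\<And>v. lin (\<lambda>u. F u v)"
    and "\<And>u. lin (G u)" "\<And>v. lin (\<lambda>u. G u v)"
    and "\<And>p q. F (basis_vec p) (basis_vec q) = G (basis_vec p) (basis_vec q)"
  shows "F = G"
proof (intro ext)
  have "F (basis_vec p) = G (basis_vec p)" for p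
    using lin_eq_on_basis_vec[OF assms(1,3)] assms(5) by blast
  then have "(\<lambda>u. F u v) = (\<lambda>u. G u v)" for v
    by (intro lin_eq_on_basis_vec[OF assms(2,4)]) simp
  then show "F u v w = G u v w" for u v w
    by (metis fun_cong)
qed

lemma bilin_expand:
  fixes br :: "('n::finite \<Rightarrow> 'k::field) \<Rightarrow> ('n \<Rightarrow> 'k) \<Rightarrow> ('l \<Rightarrow> 'k)"
  assumes "\<And>y. lin (\<lambda>x. br x y)" "\<And>x. lin (br x)"
  shows "br x y c = (\<Sum>j\<in>UNIV. \<Sum>l\<in>UNIV. x j * y l * br (basis_vec j) (basis_vec l) c)"
proof -
  have "br (basis_vec j) y c = (\<Sum>l\<in>UNIV. y l * br (basis_vec j) (basis_vec l) c)" for j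
    by (rule lin_expand[OF assms(2)])
  then show ?thesis
    unfolding lin_expand[OF assms(1), where x=x and c=c] by (simp add: sum_distrib_left mult_ac)
qed

lemma lin_comp: "lin f \<Longrightarrow> lin g \<Longrightarrow> lin (\<lambda>x. f (g x))"
  by (simp add: lin_def)

lemma lin_vsub: "lin f \<Longrightarrow> lin g \<Longrightarrow> lin (\<lambda>x. vsub (f x) (g x))"
  by (simp add: lin_def vsub_def vadd_def smul_def fun_eq_iff algebra_simps)

lemma lin_r_plus: "lin (r_plus r)"
  by (simp add: lin_def r_plus_def vadd_def smul_def fun_eq_iff algebra_simps
      sum.distrib sum_distrib_left)

lemma lin_dual_map: "lin (dual_map E)"
  unfolding lin_def dual_map_def
  by (simp add: pair_def vadd_def smul_def fun_eq_iff algebra_simps sum.distrib sum_distrib_left)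

lemma lin_coad: "lin (coad br x)"
  unfolding lin_def coad_def
  by (simp add: pair_def vadd_def smul_def fun_eq_iff algebra_simps sum.distrib sum_distrib_left
      sum_negf[symmetric])

lemma pair_vadd_right: "pair \<xi> (vadd x y) = pair \<xi> x + pair \<xi> y"
  by (simp add: pair_def vadd_def algebra_simps sum.distrib)

lemma pair_smul_right: "pair \<xi> (smul c x) = c * pair \<xi> x"
  by (simp add: pair_def smul_def algebra_simps sum_distrib_left)

lemma lin_coad_left:
  assumes "\<And>y. lin (\<lambda>x. br x y)"
  shows "lin (\<lambda>x. coad br x \<xi>)"
proof -
  have "br (vadd x y) z = vadd (br x z) (br y z)" "br (smul c x) z = smul c (br x z)" for x y z c
    using assms[of z] unfolding lin_def by auto
  then show ?thesis
    unfolding lin_def coad_def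
    by (simp add: pair_vadd_right pair_smul_right) (simp add: vadd_def smul_def fun_eq_iff)
qed

lemma rota_baxter_defect_r_plus_basis_vec:
  fixes br :: "('n::finite \<Rightarrow> 'k::field) \<Rightarrow> ('n \<Rightarrow> 'k) \<Rightarrow> ('n \<Rightarrow> 'k)"
  assumes bilin: "\<And>y. lin (\<lambda>x. br x y)" "\<And>x. lin (br x)"
    and "skew_tensor r"
  shows "br (r_plus r (basis_vec p)) (r_plus r (basis_vec q)) c
      - r_plus r (vsub (coad br (r_plus r (basis_vec p)) (basis_vec q))
                       (coad br (r_plus r (basis_vec q)) (basis_vec p))) c
    = CYB br r p q c"
proof -
  let ?B = "\<lambda>j k. br (basis_vec j) (basis_vec k)"
  have skew: "r q j = - r j q" for j
    using \<open>skew_tensor r\<close> unfolding skew_tensor_def by blast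
  have coad_r: "coad br (r s) (basis_vec t) m = - (\<Sum>j\<in>UNIV. r s j * ?B j m t)" for s t m
    by (simp add: coad_def pair_basis_vec lin_expand[OF bilin(1), where x="r s" and c=t])
  have r_plus_coad:
    "r_plus r (vsub (coad br (r p) (basis_vec q)) (coad br (r q) (basis_vec p))) c
      = - (\<Sum>m\<in>UNIV. (\<Sum>j\<in>UNIV. r p j * ?B j m q) * r m c)
        + (\<Sum>m\<in>UNIV. (\<Sum>j\<in>UNIV. r q j * ?B j m p) * r m c)"
    by (simp add: r_plus_def vsub_def coad_r left_diff_distrib sum_subtractf sum_negf)
  have third_CYB_term: "(\<Sum>m\<in>UNIV. (\<Sum>j\<in>UNIV. r p j * ?B j m q) * r m c)
      = (\<Sum>j\<in>UNIV. \<Sum>k\<in>UNIV. r p j * r k c * ?B j k q)"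
    unfolding sum_distrib_right by (subst sum.swap) (simp add: mult_ac)
  have first_CYB_term: "(\<Sum>m\<in>UNIV. (\<Sum>j\<in>UNIV. r q j * ?B j m p) * r m c)
      = - (\<Sum>i\<in>UNIV. \<Sum>k\<in>UNIV. r i q * r k c * ?B i k p)"
    unfolding skew sum_distrib_right sum_negf[symmetric] by (subst sum.swap) (simp add: mult_ac)
  show ?thesis
    unfolding r_plus_basis_vec r_plus_coad first_CYB_term third_CYB_term bilin_expand[OF bilin, of "r p"] CYB_def
    by (simp add: algebra_simps)
qed

lemma E_r_plus_defect_basis_vec:
  assumes "lin E"
  shows "E (r_plus r (basis_vec p)) b - r_plus r (dual_map E (basis_vec p)) b = IdE_minus_EId E r p b"
  unfolding r_plus_basis_vec lin_expand[OF assms, where x="r p" and c=b]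
  by (simp add: IdE_minus_EId_def r_plus_def dual_map_def pair_basis_vec mult_ac)

lemma rota_baxter_identity_r_plus_iff_CYB:
  fixes br :: "('n::finite \<Rightarrow> 'k::field) \<Rightarrow> ('n \<Rightarrow> 'k) \<Rightarrow> ('n \<Rightarrow> 'k)"
  assumes bilin: "\<And>y. lin (\<lambda>x. br x y)" "\<And>x. lin (br x)"
    and skew: "skew_tensor r"
  shows "(\<forall>u v. br (r_plus r u) (r_plus r v)
            = r_plus r (vsub (coad br (r_plus r u) v) (coad br (r_plus r v) u)))
    \<longleftrightarrow> (\<forall>a b c. CYB br r a b c = 0)"
    (is "(\<forall>u v. ?F u v = ?G u v) \<longleftrightarrow> _")
proof
  assume "\<forall>u v. ?F u v = ?G u v"
  then show "\<forall>a b c. CYB br r a b c = 0"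
    using rota_baxter_defect_r_plus_basis_vec[OF bilin skew] by simp
next
  assume CYB: "\<forall>a b c. CYB br r a b c = 0"
  have "?F = ?G"
  proof (rule bilin_eq_on_basis_vec)
    show "lin (?F u)" "lin (?G u)" for u
      using lin_comp[OF bilin(2) lin_r_plus]
        lin_comp[OF lin_r_plus lin_vsub[OF lin_coad lin_comp[OF lin_coad_left[OF bilin(1)] lin_r_plus]]]
      by simp_all
    show "lin (\<lambda>u. ?F u v)" "lin (\<lambda>u. ?G u v)" for v
      using lin_comp[OF bilin(1) lin_r_plus]
        lin_comp[OF lin_r_plus lin_vsub[OF lin_comp[OF lin_coad_left[OF bilin(1)] lin_r_plus] lin_coad]]
      by simp_all
    show "?F (basis_vec p) (basis_vec q) = ?G (basis_vec p) (basis_vec q)" for p q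
      using rota_baxter_defect_r_plus_basis_vec[OF bilin skew, of p q] CYB by (simp add: fun_eq_iff)
  qed
  then show "\<forall>u v. ?F u v = ?G u v"
    by metis
qed

lemma E_r_plus_eq_r_plus_dual_map_iff_IdE_minus_EId:
  assumes "lin E"
  shows "(\<forall>u. E (r_plus r u) = r_plus r (dual_map E u)) \<longleftrightarrow> (\<forall>a b. IdE_minus_EId E r a b = 0)"
proof
  assume commute: "\<forall>u. E (r_plus r u) = r_plus r (dual_map E u)"
  show "\<forall>a b. IdE_minus_EId E r a b = 0"
    unfolding E_r_plus_defect_basis_vec[OF assms, symmetric] by (simp add: commute)
next
  assume "\<forall>a b. IdE_minus_EId E r a b = 0"
  then have "E (r_plus r (basis_vec p)) = r_plus r (dual_map E (basis_vec p))" for p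
    using E_r_plus_defect_basis_vec[OF assms, where r=r and p=p] by (simp add: fun_eq_iff)
  then have "(\<lambda>u. E (r_plus r u)) = (\<lambda>u. r_plus r (dual_map E u))"
    by (intro lin_eq_on_basis_vec lin_comp[OF assms lin_r_plus] lin_comp[OF lin_r_plus lin_dual_map])
  then show "\<forall>u. E (r_plus r u) = r_plus r (dual_map E u)"
    by metis
qed

theorem proposition6p6:
  fixes br :: "('n::finite \<Rightarrow> 'k::field_char_0) \<Rightarrow> ('n \<Rightarrow> 'k) \<Rightarrow> ('n \<Rightarrow> 'k)"
    and E :: "('n \<Rightarrow> 'k) \<Rightarrow> ('n \<Rightarrow> 'k)"
    and r :: "'n \<Rightarrow> 'n \<Rightarrow> 'k"
  assumes "alg_closed TYPE('k)"
    and "ENL_algebra br E"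
    and "skew_tensor r"
  shows "ENE_relative_RB br E (dual_map E) (coad br) (r_plus r) \<longleftrightarrow> EN_r_matrix br E r"
proof -
  have bilin: "\<And>y. lin (\<lambda>x. br x y)" "\<And>x. lin (br x)" and "lin E"
    using \<open>ENL_algebra br E\<close> unfolding ENL_algebra_def lie_algebra_def by blast+
  show ?thesis
    unfolding ENE_relative_RB_def EN_r_matrix_def
    using lin_r_plus rota_baxter_identity_r_plus_iff_CYB[OF bilin \<open>skew_tensor r\<close>]
      E_r_plus_eq_r_plus_dual_map_iff_IdE_minus_EId[OF \<open>lin E\<close>]
    by blast
qed

end
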